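(* Let $n\ge1$ and let $t_1,\dots,t_{n+1}$ be real nodes with $t_i\ne t_j$ for $i\ne j$. Let $L=(l_{i,j})_{1\le i,j\le n+1}$ be the collocation matrix of the Newton basis at these nodes, i.e. $l_{i,j}=\prod_{k=1}^{j-1}(t_i-t_k)$ (so $L$ is lower triangular). Then $$L=F_nF_{n-1}\cdots F_1D,$$ where $D=\mathrm{diag}(d_{1,1},\dots,d_{n+1,n+1})$ with $d_{i,i}=\prod_{k=1}^{i-1}(t_i-t_k)$, and for $i=1,\dots,n$, $F_i\in\mathbb R^{(n+1)\times(n+1)}$ is the lower bidiagonal matrix with ones on the diagonal, whose subdiagonal entries are $(F_i)_{r,r-1}=m_{r,r-i}$ for $r=i+1,\dots,n+1$ and $(F_i)_{r,r-1}=0$ for $r\le i$, all other entries being zero, where $$m_{i,j}=\prod_{k=1}^{j-1}\frac{t_i-t_{i-k}}{t_{i-1}-t_{i-k-1}},\qquad 1\le j<i\le n+1$$ (an empty product equals $1$).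
   Context: The Newton basis associated with nodes $t_1,\dots,t_{n+1}$ is $w_0(t)=1$, $w_i(t)=\prod_{k=1}^{i}(t-t_k)$, $i=1,\dots,n$; its collocation matrix at the nodes is $L=(w_{j-1}(t_i))_{1\le i,j\le n+1}$. *)

theory Defs
  imports "Jordan_Normal_Form.Matrix"
begin

text \<open>Nodes are t 1, ..., t (n+1) (1-based). Matrices are (n+1) x (n+1) matrices of the
  Jordan_Normal_Form library, whose entries are 0-based: entry (i,j) of the Isabelle matrix
  is entry (i+1,j+1) of the paper's matrix. The helpers below use the paper's 1-based indices.\<close>

definition newton_l :: "(nat \<Rightarrow> real) \<Rightarrow> nat \<Rightarrow> nat \<Rightarrow> real" where
  "newton_l t i j = (\<Prod>k\<in>{1..<j}. (t i - t k))"

definition newton_L :: "nat \<Rightarrow> (nat \<Rightarrow> real) \<Rightarrow> real mat" where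
  "newton_L n t = mat (n+1) (n+1) (\<lambda>(i,j). newton_l t (i+1) (j+1))"

definition newton_D :: "nat \<Rightarrow> (nat \<Rightarrow> real) \<Rightarrow> real mat" where
  "newton_D n t = mat (n+1) (n+1)
     (\<lambda>(i,j). if i = j then (\<Prod>k\<in>{1..<i+1}. (t (i+1) - t k)) else 0)"

definition newton_m :: "(nat \<Rightarrow> real) \<Rightarrow> nat \<Rightarrow> nat \<Rightarrow> real" where
  "newton_m t i j = (\<Prod>k\<in>{1..<j}. (t i - t (i - k)) / (t (i - 1) - t (i - k - 1)))"

definition newton_F_entry :: "(nat \<Rightarrow> real) \<Rightarrow> nat \<Rightarrow> nat \<Rightarrow> nat \<Rightarrow> real" where
  "newton_F_entry t i r c =
     (if r = c then 1
      else if c + 1 = r \<and> i + 1 \<le> r then newton_m t r (r - i)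
      else 0)"

definition newton_F :: "nat \<Rightarrow> (nat \<Rightarrow> real) \<Rightarrow> nat \<Rightarrow> real mat" where
  "newton_F n t i = mat (n+1) (n+1) (\<lambda>(r,c). newton_F_entry t i (r+1) (c+1))"

fun newton_Fprod :: "nat \<Rightarrow> (nat \<Rightarrow> real) \<Rightarrow> nat \<Rightarrow> real mat" where
  "newton_Fprod n t 0 = 1\<^sub>m (n+1)"
| "newton_Fprod n t (Suc k) = newton_F n t (Suc k) * newton_Fprod n t k"

end

theory Submission
  imports Defs
begin

text \<open>Induction on the number of nodes, removing the first one. Let t' = (t_2, t_3, ...) and
  write diag(1, M) for the block matrix bordered by a leading 1. The Newton basis functions
  satisfy w_j(x) = (x - t_1) w'_{j-1}(x) and w'_j(x) = (x - t_{j+1}) w'_{j-1}(x), so splitting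
  x - t_1 = (x - t_{j+1}) + (t_{j+1} - t_1) gives L(t) = diag(1, L(t')) Y, where Y is lower
  bidiagonal with ones below the diagonal and diagonal (1, t_2 - t_1, t_3 - t_1, ...).
  On the other side, F_{i+1} for t is diag(1, F_i) for t' when i >= 1, and
  m_{r,r-1} = d'_{r-1,r-1} / d_{r-1,r-1} gives F_1 D = diag(1, D') Y. Hence
  F_{n+1} ... F_1 D = diag(1, F'_n ... F'_1 D') Y = diag(1, L(t')) Y = L(t).\<close>

definition one_block_mat :: "'a::{zero,one} mat \<Rightarrow> 'a mat" where
  "one_block_mat M = four_block_mat (1\<^sub>m 1) (0\<^sub>m 1 (dim_col M)) (0\<^sub>m (dim_row M) 1) M"

lemma one_block_mat_carrier [simp]:
  "M \<in> carrier_mat nr nc \<Longrightarrow> one_block_mat M \<in> carrier_mat (Suc nr) (Suc nc)"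
  unfolding one_block_mat_def carrier_mat_def by simp

lemma index_one_block_mat [simp]:
  "i < Suc (dim_row M) \<Longrightarrow> j < Suc (dim_col M) \<Longrightarrow> one_block_mat M $$ (i, j) =
     (if i = 0 \<or> j = 0 then (if i = j then 1 else 0) else M $$ (i - 1, j - 1))"
  "dim_row (one_block_mat M) = Suc (dim_row M)"
  "dim_col (one_block_mat M) = Suc (dim_col M)"
  unfolding one_block_mat_def by auto

lemma one_block_one_mat [simp]: "one_block_mat (1\<^sub>m n) = 1\<^sub>m (Suc n)"
  by (rule eq_matI) auto

lemma one_block_mat_mult:
  fixes A B :: "'a::semiring_1 mat"
  assumes "A \<in> carrier_mat nr n" "B \<in> carrier_mat n nc"
  shows "one_block_mat A * one_block_mat B = one_block_mat (A * B)"
  using assms unfolding one_block_mat_def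
  by (subst mult_four_block_mat[of _ 1 1 _ n _ nr _ _ 1 _ nc]) auto

definition lower_bidiag_mat :: "nat \<Rightarrow> (nat \<Rightarrow> 'a::zero) \<Rightarrow> (nat \<Rightarrow> 'a) \<Rightarrow> 'a mat" where
  "lower_bidiag_mat n d e = mat n n (\<lambda>(i, j). if i = j then d j else if i = Suc j then e j else 0)"

lemma lower_bidiag_mat_carrier [simp]: "lower_bidiag_mat n d e \<in> carrier_mat n n"
  unfolding lower_bidiag_mat_def by simp

lemma index_lower_bidiag_mat [simp]:
  "i < n \<Longrightarrow> j < n \<Longrightarrow>
     lower_bidiag_mat n d e $$ (i, j) = (if i = j then d j else if i = Suc j then e j else 0)"
  "dim_row (lower_bidiag_mat n d e) = n"
  "dim_col (lower_bidiag_mat n d e) = n"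
  unfolding lower_bidiag_mat_def by auto

lemma index_mult_lower_bidiag_mat:
  fixes A :: "'a::semiring_0 mat"
  assumes "A \<in> carrier_mat nr n" "i < nr" "j < n"
  shows "(A * lower_bidiag_mat n d e) $$ (i, j) =
    A $$ (i, j) * d j + (if Suc j < n then A $$ (i, Suc j) * e j else 0)"
proof -
  have "(A * lower_bidiag_mat n d e) $$ (i, j) =
      (\<Sum>k<n. (if k = j then A $$ (i, k) * d j else 0) + (if k = Suc j then A $$ (i, k) * e j else 0))"
    using assms by (auto simp: scalar_prod_def atLeast0LessThan intro!: sum.cong)
  then show ?thesis
    using assms(3) by (simp add: sum.distrib)
qed

lemma newton_l_Suc_Suc:
  "newton_l t r (Suc (Suc c)) = newton_l t r (Suc c) * (t r - t (Suc c))"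
  unfolding newton_l_def by (simp add: prod.atLeastLessThan_Suc)

lemma newton_l_drop_first_node:
  "newton_l t (Suc r) (Suc (Suc c)) = (t (Suc r) - t 1) * newton_l (t \<circ> Suc) r (Suc c)"
  unfolding newton_l_def
  by (simp add: prod.atLeast_Suc_lessThan prod.shift_bounds_Suc_ivl del: prod.op_ivl_Suc)

lemma newton_l_le_1: "c \<le> 1 \<Longrightarrow> newton_l t r c = 1"
  unfolding newton_l_def by simp

lemma newton_l_eq_0: "0 < r \<Longrightarrow> r < c \<Longrightarrow> newton_l t r c = 0"
  unfolding newton_l_def by (rule prod_zero) auto

lemma newton_l_diag_nonzero: "inj_on t {1..r} \<Longrightarrow> newton_l t r r \<noteq> 0"
  unfolding newton_l_def by (fastforce dest: inj_onD)

lemma newton_m_shift: "j \<le> i \<Longrightarrow> newton_m t (Suc i) j = newton_m (t \<circ> Suc) i j"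
  unfolding newton_m_def
  by (intro prod.cong) (auto simp: Suc_diff_le Suc_diff_Suc)

lemma newton_m_subdiag:
  "newton_m t (Suc (Suc c)) (Suc c) = newton_l (t \<circ> Suc) (Suc c) (Suc c) / newton_l t (Suc c) (Suc c)"
proof -
  have "(\<Prod>k\<in>{1..<Suc c}. t (Suc (Suc c)) - t (Suc (Suc c) - k)) =
      newton_l (t \<circ> Suc) (Suc c) (Suc c)"
    unfolding newton_l_def
    by (rule prod.reindex_bij_witness[of _ "\<lambda>k. Suc c - k" "\<lambda>k. Suc c - k"])
      (auto simp: Suc_diff_le)
  moreover have "(\<Prod>k\<in>{1..<Suc c}. t (Suc c) - t (Suc c - k)) = newton_l t (Suc c) (Suc c)"
    unfolding newton_l_def
    by (rule prod.reindex_bij_witness[of _ "\<lambda>k. Suc c - k" "\<lambda>k. Suc c - k"]) auto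
  moreover have "newton_m t (Suc (Suc c)) (Suc c) =
      (\<Prod>k\<in>{1..<Suc c}. t (Suc (Suc c)) - t (Suc (Suc c) - k)) /
      (\<Prod>k\<in>{1..<Suc c}. t (Suc c) - t (Suc c - k))"
    unfolding newton_m_def prod_dividef by (intro arg_cong2[where f = "(/)"] prod.cong) auto
  ultimately show ?thesis by simp
qed

lemma newton_D_carrier [simp]: "newton_D n t \<in> carrier_mat (Suc n) (Suc n)"
  by (simp add: newton_D_def)

lemma newton_F_carrier [simp]: "newton_F n t k \<in> carrier_mat (Suc n) (Suc n)"
  by (simp add: newton_F_def)

lemma newton_Fprod_carrier [simp]: "newton_Fprod n t k \<in> carrier_mat (Suc n) (Suc n)"
  by (induction k) (auto intro!: mult_carrier_mat[OF newton_F_carrier])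

lemma newton_D_eq_mat_diag: "newton_D n t = mat_diag (Suc n) (\<lambda>i. newton_l t (Suc i) (Suc i))"
  by (rule eq_matI) (auto simp: newton_D_def mat_diag_def newton_l_def)

lemma one_block_newton_D: "one_block_mat (newton_D n t) = mat_diag (Suc (Suc n)) (\<lambda>i. newton_l t i i)"
  by (rule eq_matI) (auto simp: newton_D_eq_mat_diag mat_diag_def newton_l_le_1)

definition newton_recur_mat :: "nat \<Rightarrow> (nat \<Rightarrow> real) \<Rightarrow> real mat" where
  "newton_recur_mat n t =
     lower_bidiag_mat (Suc n) (\<lambda>j. if j = 0 then 1 else t (Suc j) - t 1) (\<lambda>_. 1)"

lemma newton_recur_mat_carrier [simp]: "newton_recur_mat n t \<in> carrier_mat (Suc n) (Suc n)"
  by (simp add: newton_recur_mat_def)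

lemma newton_L_Suc:
  "newton_L (Suc n) t = one_block_mat (newton_L n (t \<circ> Suc)) * newton_recur_mat (Suc n) t"
  (is "_ = ?A * _")
proof (rule eq_matI)
  fix i j
  assume "i < dim_row (?A * newton_recur_mat (Suc n) t)"
    and "j < dim_col (?A * newton_recur_mat (Suc n) t)"
  then have ij: "i < Suc (Suc n)" "j < Suc (Suc n)"
    by (simp_all add: newton_L_def newton_recur_mat_def)
  have A: "?A \<in> carrier_mat (Suc (Suc n)) (Suc (Suc n))"
    by (simp add: newton_L_def)
  have "(?A * newton_recur_mat (Suc n) t) $$ (i, j) =
      ?A $$ (i, j) * (if j = 0 then 1 else t (Suc j) - t 1) +
      (if Suc j < Suc (Suc n) then ?A $$ (i, Suc j) else 0)"
    unfolding newton_recur_mat_def using ij by (subst index_mult_lower_bidiag_mat[OF A]) auto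
  also have "\<dots> = newton_l t (Suc i) (Suc j)"
  proof (cases "i = 0 \<or> j = 0")
    case True
    then show ?thesis
      using ij by (auto simp: newton_L_def newton_l_eq_0 newton_l_le_1)
  next
    case False
    then obtain r c where rc: "i = Suc r" "j = Suc c"
      by (meson not0_implies_Suc)
    have "(if Suc j < Suc (Suc n) then ?A $$ (i, Suc j) else 0) = newton_l (t \<circ> Suc) i (Suc j)"
      using ij by (auto simp: rc newton_L_def newton_l_eq_0)
    moreover have "?A $$ (i, j) = newton_l (t \<circ> Suc) i j"
      using ij by (simp add: rc newton_L_def)
    moreover have "newton_l t (Suc i) (Suc j) = (t (Suc i) - t 1) * newton_l (t \<circ> Suc) i j"
      unfolding rc by (rule newton_l_drop_first_node)
    moreover have "newton_l (t \<circ> Suc) i (Suc j) = newton_l (t \<circ> Suc) i j * (t (Suc i) - t (Suc j))"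
      unfolding rc by (simp add: newton_l_Suc_Suc)
    ultimately show ?thesis
      using False by (simp add: algebra_simps)
  qed
  finally show "newton_L (Suc n) t $$ (i, j) = (?A * newton_recur_mat (Suc n) t) $$ (i, j)"
    using ij by (simp add: newton_L_def)
qed (simp_all add: newton_L_def newton_recur_mat_def)

lemma newton_F_1_mult_D:
  assumes "inj_on t {1..Suc (Suc n)}"
  shows "newton_F (Suc n) t 1 * newton_D (Suc n) t =
    one_block_mat (newton_D n (t \<circ> Suc)) * newton_recur_mat (Suc n) t"
proof -
  have subdiag: "newton_m t (Suc (Suc j)) (Suc j) * newton_l t (Suc j) (Suc j) =
      newton_l (t \<circ> Suc) (Suc j) (Suc j)" if "j \<le> n" for j
  proof -
    have "inj_on t {1..Suc j}"
      using assms by (rule inj_on_subset) (use that in auto)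
    then show ?thesis
      by (simp add: newton_m_subdiag newton_l_diag_nonzero)
  qed
  have diag: "newton_l t (Suc j) (Suc j) = newton_l (t \<circ> Suc) j j * (t (Suc j) - t 1)"
    if "0 < j" for j
    using that newton_l_drop_first_node[of t j "j - 1"] by (simp add: mult.commute)
  show ?thesis
    unfolding one_block_newton_D
    unfolding newton_D_eq_mat_diag mat_diag_mult_right[OF newton_F_carrier]
      mat_diag_mult_left[OF newton_recur_mat_carrier]
    by (rule eq_matI)
      (auto simp: newton_F_def newton_F_entry_def newton_recur_mat_def subdiag diag newton_l_le_1)
qed

lemma newton_F_Suc:
  assumes "0 < k"
  shows "newton_F (Suc n) t (Suc k) = one_block_mat (newton_F n (t \<circ> Suc) k)"
  by (rule eq_matI) (use assms in \<open>auto simp: newton_F_def newton_F_entry_def newton_m_shift\<close>)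

lemma newton_Fprod_Suc:
  "newton_Fprod (Suc n) t (Suc k) = one_block_mat (newton_Fprod n (t \<circ> Suc) k) * newton_F (Suc n) t 1"
proof (induction k)
  case 0
  show ?case by (simp add: newton_F_def)
next
  case (Suc k)
  have "newton_Fprod (Suc n) t (Suc (Suc k)) =
      one_block_mat (newton_F n (t \<circ> Suc) (Suc k)) *
      (one_block_mat (newton_Fprod n (t \<circ> Suc) k) * newton_F (Suc n) t 1)"
    by (simp only: newton_Fprod.simps(2)[of _ _ "Suc k"] Suc.IH newton_F_Suc[OF zero_less_Suc])
  also have "\<dots> = one_block_mat (newton_F n (t \<circ> Suc) (Suc k)) *
      one_block_mat (newton_Fprod n (t \<circ> Suc) k) * newton_F (Suc n) t 1"
    by (rule assoc_mult_mat[symmetric, of _ "Suc (Suc n)" "Suc (Suc n)" _ "Suc (Suc n)" _ "Suc (Suc n)"])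
      simp_all
  also have "one_block_mat (newton_F n (t \<circ> Suc) (Suc k)) *
      one_block_mat (newton_Fprod n (t \<circ> Suc) k) = one_block_mat (newton_Fprod n (t \<circ> Suc) (Suc k))"
    by (simp add: one_block_mat_mult[OF newton_F_carrier newton_Fprod_carrier])
  finally show ?case .
qed

lemma newton_L_factorization:
  "inj_on t {1..Suc n} \<Longrightarrow> newton_L n t = newton_Fprod n t n * newton_D n t"
proof (induction n arbitrary: t)
  case 0
  show ?case
    by (rule eq_matI) (auto simp: newton_L_def newton_D_def newton_l_le_1)
next
  case (Suc n)
  have "inj_on (t \<circ> Suc) {1..Suc n}"
  proof (rule comp_inj_on)
    show "inj_on t (Suc ` {1..Suc n})"
      using Suc.prems by (rule inj_on_subset) auto
  qed simp
  then have IH: "newton_L n (t \<circ> Suc) = newton_Fprod n (t \<circ> Suc) n * newton_D n (t \<circ> Suc)"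
    by (rule Suc.IH)
  have "newton_L (Suc n) t = one_block_mat (newton_L n (t \<circ> Suc)) * newton_recur_mat (Suc n) t"
    by (rule newton_L_Suc)
  also have "\<dots> = one_block_mat (newton_Fprod n (t \<circ> Suc) n) *
      one_block_mat (newton_D n (t \<circ> Suc)) * newton_recur_mat (Suc n) t"
    by (simp add: IH one_block_mat_mult[OF newton_Fprod_carrier newton_D_carrier])
  also have "\<dots> = one_block_mat (newton_Fprod n (t \<circ> Suc) n) *
      (newton_F (Suc n) t 1 * newton_D (Suc n) t)"
    unfolding newton_F_1_mult_D[OF Suc.prems]
    by (rule assoc_mult_mat[of _ "Suc (Suc n)" "Suc (Suc n)" _ "Suc (Suc n)" _ "Suc (Suc n)"]) simp_all
  also have "\<dots> = newton_Fprod (Suc n) t (Suc n) * newton_D (Suc n) t"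
    unfolding newton_Fprod_Suc
    by (rule assoc_mult_mat[symmetric, of _ "Suc (Suc n)" "Suc (Suc n)" _ "Suc (Suc n)" _ "Suc (Suc n)"])
      simp_all
  finally show ?case .
qed

text \<open>The factorization holds for n = 0 as well.\<close>

theorem theorem2:
  fixes n :: nat and t :: "nat \<Rightarrow> real"
  assumes "n \<ge> 1"
    and "\<And>i j. i \<in> {1..n+1} \<Longrightarrow> j \<in> {1..n+1} \<Longrightarrow> i \<noteq> j \<Longrightarrow> t i \<noteq> t j"
  shows "newton_L n t = newton_Fprod n t n * newton_D n t"
proof (rule newton_L_factorization)
  show "inj_on t {1..Suc n}"
    using assms(2) by (intro inj_onI) (metis Suc_eq_plus1)
qed

end
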